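(* Let $n\ge2$, $1\le k\le n-1$, $\alpha>0$, and let $Y$ be a random variable with continuous distribution function $G$ with $l_G=0$, $r_G=\infty$. Then $G(y)=1-\exp\{-cy^{\alpha}\}$ ($y>0$) for some constant $c>0$ if and only if \[ E\big[[Y(n)]^{-\alpha(k+1)}\mid Y(n-k)=s,\ Y(n+1)=t\big]=t^{-\alpha k}s^{-\alpha}\qquad (0<s<t<\infty). \]
   Context: $Y_1,Y_2,\dots$ are i.i.d. copies of $Y$ with distribution function $G$; $l_G=\inf\{y:G(y)>0\}$, $r_G=\sup\{y:G(y)<1\}$. Upper record times $L(1)=1$, $L(m)=\min\{j>L(m-1):Y_j>Y_{L(m-1)}\}$, record values $Y(m)=Y_{L(m)}$. With $R(y)=-\ln(1-G(y))$, conditional expectations given $Y(n-k)=s$, $Y(n+1)=t$ use the conditional density of $Y(n)$: $k[\frac{R(x)-R(s)}{R(t)-R(s)}]^{k-1}\frac{R'(x)}{R(t)-R(s)}$, $s<x<t$. *)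

theory Defs
  imports "HOL-Analysis.Analysis"
begin

definition lG :: "(real \<Rightarrow> real) \<Rightarrow> ereal" where
  "lG G = Inf (ereal ` {y. G y > 0})"

definition rG :: "(real \<Rightarrow> real) \<Rightarrow> ereal" where
  "rG G = Sup (ereal ` {y. G y < 1})"

definition is_dist_fun :: "(real \<Rightarrow> real) \<Rightarrow> bool" where
  "is_dist_fun G \<longleftrightarrow> mono G \<and> (\<forall>a. continuous (at_right a) G)
     \<and> (G \<longlongrightarrow> 0) at_bot \<and> (G \<longlongrightarrow> 1) at_top"

definition RG :: "(real \<Rightarrow> real) \<Rightarrow> real \<Rightarrow> real" where
  "RG G y = - ln (1 - G y)"

text \<open>Conditional distribution function of Y(n) given Y(n-k)=s, Y(n+1)=t:
  P(Y(n) \<le> x | ...) = ((R x - R s)/(R t - R s))^k for s < x < t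
  (integral of the conditional density k[(R(x)-R(s))/(R(t)-R(s))]^(k-1) R'(x)/(R(t)-R(s))).\<close>
definition rec_cond_cdf :: "(real \<Rightarrow> real) \<Rightarrow> nat \<Rightarrow> real \<Rightarrow> real \<Rightarrow> real \<Rightarrow> real" where
  "rec_cond_cdf G k s t x =
     (if x \<le> s then 0 else if t \<le> x then 1
      else ((RG G x - RG G s) / (RG G t - RG G s)) ^ k)"

text \<open>Conditional law of Y(n) given Y(n-k)=s, Y(n+1)=t (as a Lebesgue-Stieltjes measure);
  it does not depend on n.\<close>
definition rec_cond_law :: "(real \<Rightarrow> real) \<Rightarrow> nat \<Rightarrow> nat \<Rightarrow> real \<Rightarrow> real \<Rightarrow> real measure" where
  "rec_cond_law G n k s t = interval_measure (rec_cond_cdf G k s t)"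

definition rec_cond_exp ::
  "(real \<Rightarrow> real) \<Rightarrow> nat \<Rightarrow> nat \<Rightarrow> (real \<Rightarrow> real) \<Rightarrow> real \<Rightarrow> real \<Rightarrow> real" where
  "rec_cond_exp G n k h s t = integral\<^sup>L (rec_cond_law G n k s t) h"

end

theory Submission
  imports Defs "HOL-Probability.Probability"
begin

(* Write R = -ln (1 - G) for the cumulative hazard, beta = alpha (k + 1) and p = s^alpha.
   Given Y(n-k) = s and Y(n+1) = t, the law of Y(n) has distribution function
   ((R x - R s) / (R t - R s))^k on [s,t].  Integrating x^(-beta) against it by parts gives
     E = t^(-beta) + int_s^t beta u^(-beta-1) ((R u - R s) / (R t - R s))^k du,
   the quantity cond_moment below.
   Sufficiency: for R u = c u^alpha the integrand has the explicit primitive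
   Phi u = (1 - p / u^alpha)^(k+1) / p, and the moment evaluates to t^(-alpha k) s^(-alpha).
   Necessity: fix s.  The moment identity says h(t) = int_s^t beta u^(-beta-1) (R u - R s)^k du
   equals e(t) Phi(t) with e(t) = ((R t - R s) / (t^alpha - p))^k, and differentiating h shows
   h' = e Phi' as well; hence h / Phi = e is constant, i.e. R t - R s = C (t^alpha - s^alpha).
   Comparing these relations for different s and letting s tend to 0 (R 0 = 0 because l_G = 0)
   yields R y = c y^alpha, which is the Weibull law. *)

lemma powr_mult_of_nat: "0 < u \<Longrightarrow> u powr (a * real m) = (u powr a) ^ m"
  for u a :: real
  by (simp add: powr_powr[symmetric] powr_realpow)

text \<open>If \<open>h = e \<Phi>\<close> and \<open>h' = e \<Phi>'\<close> on \<open>(a,\<infinity>)\<close> with \<open>\<Phi> \<noteq> 0\<close>, then \<open>(h / \<Phi>)' = 0\<close>, so the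
  factor \<open>e\<close> is constant.\<close>
lemma ratio_constant:
  fixes h \<Phi> \<Phi>' e :: "real \<Rightarrow> real"
  assumes h': "\<And>x. a < x \<Longrightarrow> (h has_real_derivative e x * \<Phi>' x) (at x)"
    and \<Phi>': "\<And>x. a < x \<Longrightarrow> (\<Phi> has_real_derivative \<Phi>' x) (at x)"
    and nz: "\<And>x. a < x \<Longrightarrow> \<Phi> x \<noteq> 0"
    and h: "\<And>x. a < x \<Longrightarrow> h x = e x * \<Phi> x"
    and "a < x" "a < y"
  shows "e x = e y"
proof -
  have Q': "((\<lambda>x. h x / \<Phi> x) has_real_derivative 0) (at z)" if "a < z" for z
    using DERIV_divide[OF h'[OF that] \<Phi>'[OF that] nz[OF that]] h[OF that]
    by (simp add: algebra_simps)
  have "h x / \<Phi> x = h y / \<Phi> y"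
    by (rule DERIV_isconst3[where a = a and b = "max x y + 1"]) (use Q' \<open>a < x\<close> \<open>a < y\<close> in auto)
  then show ?thesis using h nz \<open>a < x\<close> \<open>a < y\<close> by simp
qed

lemma continuous_at_right_eventually_eq:
  fixes f g :: "real \<Rightarrow> real"
  assumes "eventually (\<lambda>x. f x = g x) (at_right a)" and "f a = g a" and "isCont g a"
  shows "continuous (at_right a) f"
proof -
  have "(g \<longlongrightarrow> f a) (at_right a)"
    using assms(2,3) by (simp add: isCont_def filterlim_at_split)
  then have "(f \<longlongrightarrow> f a) (at_right a)"
    using assms(1) by (rule tendsto_cong[THEN iffD2, rotated])
  then show ?thesis by (simp add: continuous_within)
qed

lemma integral_upper_limit_has_derivative:
  fixes f :: "real \<Rightarrow> real"
  assumes "continuous_on {s..} f" and "s < t"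
  shows "((\<lambda>x. integral {s..x} f) has_real_derivative f t) (at t)"
proof -
  have "continuous_on {s..t + 1} f"
    using assms(1) by (rule continuous_on_subset) auto
  from integral_has_real_derivative[OF this, of t]
  have "((\<lambda>x. integral {s..x} f) has_real_derivative f t) (at t within {s<..<t + 1})"
    using assms(2) by (auto intro: has_field_derivative_subset)
  then show ?thesis
    using at_within_open[of t "{s<..<t + 1}"] assms(2) by simp
qed

lemma nn_integral_neg_derivative:
  fixes \<phi> \<psi> :: "real \<Rightarrow> real"
  assumes [measurable]: "\<psi> \<in> borel_measurable borel" and "x \<le> t"
    and \<phi>': "\<And>u. u \<in> {x..t} \<Longrightarrow> (\<phi> has_real_derivative - \<psi> u) (at u)"
    and \<psi>_nonneg: "\<And>u. u \<in> {x..t} \<Longrightarrow> 0 \<le> \<psi> u"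
  shows "(\<integral>\<^sup>+ u. ennreal (\<psi> u) * indicator {x..t} u \<partial>lborel) = ennreal (\<phi> x - \<phi> t)"
proof -
  have "(\<integral>\<^sup>+ u. ennreal (\<psi> u) * indicator {x..t} u \<partial>lborel) = ennreal (- \<phi> t - - \<phi> x)"
  proof (rule nn_integral_FTC_Icc)
    fix u assume u: "u \<in> {x..t}"
    show "((\<lambda>u. - \<phi> u) has_real_derivative \<psi> u) (at u)"
      using DERIV_minus[OF \<phi>'[OF u]] by simp
  qed (use assms in auto)
  then show ?thesis by simp
qed

lemma interval_measure_concentrated:
  fixes F :: "real \<Rightarrow> real" and s t :: real
  assumes mono: "\<And>x y. x \<le> y \<Longrightarrow> F x \<le> F y" and rc: "\<And>a. continuous (at_right a) F"
    and F0: "\<And>x. x \<le> s \<Longrightarrow> F x = 0" and F1: "\<And>x. t \<le> x \<Longrightarrow> F x = 1"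
  shows "real_distribution (interval_measure F)"
    and "\<And>u. s \<le> u \<Longrightarrow> emeasure (interval_measure F) {s<..u} = F u"
    and "AE x in interval_measure F. s < x \<and> x \<le> t"
proof -
  have "(F \<longlongrightarrow> 0) at_bot"
    by (rule tendsto_eventually) (use F0 in \<open>auto simp: eventually_at_bot_linorder\<close>)
  moreover have "(F \<longlongrightarrow> 1) at_top"
    by (rule tendsto_eventually) (use F1 in \<open>auto simp: eventually_at_top_linorder\<close>)
  ultimately show dist: "real_distribution (interval_measure F)"
    using real_distribution_interval_measure mono rc by blast
  show Ioc: "emeasure (interval_measure F) {s<..u} = F u" if "s \<le> u" for u
    using emeasure_interval_measure_Ioc[OF that mono rc] F0[of s] by simp
  interpret real_distribution "interval_measure F" by (rule dist)
  have "s < t"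
  proof (rule ccontr)
    assume "\<not> s < t"
    then show False using F0[of t] F1[of t] by simp
  qed
  then have "prob {s<..t} = 1"
    using Ioc[of t] F1[of t] by (simp add: emeasure_eq_measure)
  from AE_prob_1[OF this] show "AE x in interval_measure F. s < x \<and> x \<le> t" by simp
qed

text \<open>Layer-cake formula via Tonelli: for \<open>\<phi>' = -\<psi> \<le> 0\<close> on \<open>[s,t]\<close>,
  \<open>\<integral> (\<phi> x - \<phi> t) 1\<^sub>(\<^sub>s\<^sub>,\<^sub>t\<^sub>] dF = \<integral>\<^sub>s\<^sup>t \<psi> u F u du\<close>, both sides being the integral of \<open>\<psi> u\<close> over
  \<open>{s < x \<le> u \<le> t}\<close>.\<close>
lemma interval_measure_layer_cake:
  fixes F \<phi> \<psi> :: "real \<Rightarrow> real" and s t :: real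
  assumes mono: "\<And>x y. x \<le> y \<Longrightarrow> F x \<le> F y" and rc: "\<And>a. continuous (at_right a) F"
    and F0: "\<And>x. x \<le> s \<Longrightarrow> F x = 0" and F1: "\<And>x. t \<le> x \<Longrightarrow> F x = 1"
    and [measurable]: "\<psi> \<in> borel_measurable borel"
    and \<phi>': "\<And>u. u \<in> {s..t} \<Longrightarrow> (\<phi> has_real_derivative - \<psi> u) (at u)"
    and \<psi>_nonneg: "\<And>u. u \<in> {s..t} \<Longrightarrow> 0 \<le> \<psi> u"
  shows "(\<integral>\<^sup>+ x. ennreal ((\<phi> x - \<phi> t) * indicator {s<..t} x) \<partial>interval_measure F)
       = (\<integral>\<^sup>+ u. ennreal (\<psi> u * F u) * indicator {s..t} u \<partial>lborel)"
proof -
  define M where "M = interval_measure F"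
  note conc = interval_measure_concentrated[of F s t, OF mono rc F0 F1, folded M_def]
  interpret M: real_distribution M by (rule conc(1))
  interpret pair_sigma_finite M lborel
    by (simp add: pair_sigma_finite_def M.sigma_finite_measure_axioms lborel.sigma_finite_measure_axioms)
  define H where "H x u = (if s < x \<and> x \<le> u \<and> u \<le> t then ennreal (\<psi> u) else 0)" for x u
  have H_measurable: "case_prod H \<in> borel_measurable (M \<Otimes>\<^sub>M lborel)"
  proof -
    have "sets (M \<Otimes>\<^sub>M lborel) = sets (borel \<Otimes>\<^sub>M borel)"
      by (intro sets_pair_measure_cong) (auto simp: M_def)
    moreover have "case_prod H \<in> borel_measurable (borel \<Otimes>\<^sub>M borel)"
      unfolding H_def by measurable
    ultimately show ?thesis by (simp cong: measurable_cong_sets)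
  qed
  have inner_u: "(\<integral>\<^sup>+ u. H x u \<partial>lborel) = ennreal ((\<phi> x - \<phi> t) * indicator {s<..t} x)" for x
  proof (cases "x \<in> {s<..t}")
    case True
    have "(\<integral>\<^sup>+ u. H x u \<partial>lborel) = (\<integral>\<^sup>+ u. ennreal (\<psi> u) * indicator {x..t} u \<partial>lborel)"
      using True by (intro nn_integral_cong) (auto simp: H_def indicator_def)
    also have "\<dots> = ennreal (\<phi> x - \<phi> t)"
      using True \<phi>' \<psi>_nonneg by (intro nn_integral_neg_derivative) auto
    finally show ?thesis using True by simp
  next
    case False
    then have "H x = (\<lambda>u. 0)" by (auto simp: H_def fun_eq_iff)
    then show ?thesis using False by simp
  qed
  have inner_x: "(\<integral>\<^sup>+ x. H x u \<partial>M) = ennreal (\<psi> u * F u) * indicator {s..t} u" for u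
  proof (cases "u \<in> {s..t}")
    case True
    have "(\<integral>\<^sup>+ x. H x u \<partial>M) = (\<integral>\<^sup>+ x. ennreal (\<psi> u) * indicator {s<..u} x \<partial>M)"
      using True by (intro nn_integral_cong) (auto simp: H_def indicator_def)
    also have "\<dots> = ennreal (\<psi> u) * ennreal (F u)"
      using True conc(2)[of u] by (simp add: nn_integral_cmult_indicator M_def)
    finally show ?thesis
      using True \<psi>_nonneg[of u] mono[of s u] F0[of s] by (simp add: ennreal_mult)
  next
    case False
    then have "(\<lambda>x. H x u) = (\<lambda>x. 0)" by (auto simp: H_def fun_eq_iff)
    then show ?thesis using False by simp
  qed
  have "(\<integral>\<^sup>+ x. ennreal ((\<phi> x - \<phi> t) * indicator {s<..t} x) \<partial>M)
      = (\<integral>\<^sup>+ x. (\<integral>\<^sup>+ u. H x u \<partial>lborel) \<partial>M)"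
    by (simp add: inner_u)
  also have "\<dots> = (\<integral>\<^sup>+ u. (\<integral>\<^sup>+ x. H x u \<partial>M) \<partial>lborel)"
    using Fubini'[OF H_measurable] by simp
  also have "\<dots> = (\<integral>\<^sup>+ u. ennreal (\<psi> u * F u) * indicator {s..t} u \<partial>lborel)"
    by (simp add: inner_x)
  finally show ?thesis by (simp add: M_def)
qed

text \<open>Integration by parts against a distribution concentrated on \<open>(s,t]\<close>:
  \<open>\<integral> \<phi> dF = \<phi> t + \<integral>\<^sub>s\<^sup>t \<psi> F\<close> when \<open>\<phi>' = -\<psi> \<le> 0\<close>.  The continuous function \<open>Fc\<close> agrees
  with \<open>F\<close> except possibly at \<open>t\<close>, so that the right-hand side is a Riemann-type integral.\<close>
lemma interval_measure_integration_by_parts: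
  fixes F Fc \<phi> \<psi> :: "real \<Rightarrow> real" and s t :: real
  assumes mono: "\<And>x y. x \<le> y \<Longrightarrow> F x \<le> F y" and rc: "\<And>a. continuous (at_right a) F"
    and F0: "\<And>x. x \<le> s \<Longrightarrow> F x = 0" and F1: "\<And>x. t \<le> x \<Longrightarrow> F x = 1"
    and Fc: "continuous_on {s..t} Fc" and F_Fc: "\<And>u. s \<le> u \<Longrightarrow> u < t \<Longrightarrow> F u = Fc u"
    and Fc_nonneg: "\<And>u. s \<le> u \<Longrightarrow> u \<le> t \<Longrightarrow> 0 \<le> Fc u"
    and [measurable]: "\<phi> \<in> borel_measurable borel" "\<psi> \<in> borel_measurable borel"
    and \<phi>': "\<And>u. u \<in> {s..t} \<Longrightarrow> (\<phi> has_real_derivative - \<psi> u) (at u)"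
    and \<psi>: "continuous_on {s..t} \<psi>" and \<psi>_nonneg: "\<And>u. u \<in> {s..t} \<Longrightarrow> 0 \<le> \<psi> u"
  shows "integral\<^sup>L (interval_measure F) \<phi> = \<phi> t + integral {s..t} (\<lambda>u. \<psi> u * Fc u)"
proof -
  define M where "M = interval_measure F"
  note conc = interval_measure_concentrated[of F s t, OF mono rc F0 F1, folded M_def]
  interpret M: real_distribution M by (rule conc(1))
  define g where "g x = (\<phi> x - \<phi> t) * indicator {s<..t} x" for x
  define I where "I = integral {s..t} (\<lambda>u. \<psi> u * Fc u)"
  have g_nonneg: "0 \<le> g x" for x
  proof (cases "x \<in> {s<..t}")
    case True
    have "\<phi> t \<le> \<phi> x"
    proof (rule DERIV_nonpos_imp_decreasing_open[of x t \<phi>])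
      have "isCont \<phi> u" if "u \<in> {x..t}" for u
        using True that by (intro DERIV_isCont[OF \<phi>']) auto
      then show "continuous_on {x..t} \<phi>" by (intro continuous_at_imp_continuous_on ballI)
      show "\<exists>y. (\<phi> has_real_derivative y) (at u) \<and> y \<le> 0" if "x < u" "u < t" for u
        using that True \<phi>'[of u] \<psi>_nonneg[of u] by (intro exI[of _ "- \<psi> u"]) auto
    qed (use True in auto)
    then show ?thesis using True by (simp add: g_def)
  qed (simp add: g_def)
  have \<psi>Fc: "continuous_on {s..t} (\<lambda>u. \<psi> u * Fc u)"
    using \<psi> Fc by (rule continuous_on_mult)
  have "(\<integral>\<^sup>+ x. ennreal (g x) \<partial>M) = (\<integral>\<^sup>+ u. ennreal (\<psi> u * F u) * indicator {s..t} u \<partial>lborel)"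
    unfolding g_def M_def by (rule interval_measure_layer_cake) fact+
  also have "\<dots> = (\<integral>\<^sup>+ u. ennreal (\<psi> u * Fc u) * indicator {s..t} u \<partial>lborel)"
    using AE_lborel_singleton[of t]
    by (intro nn_integral_cong_AE, eventually_elim) (auto simp: indicator_def F_Fc)
  also have "\<dots> = ennreal I"
    unfolding I_def using \<psi>_nonneg Fc_nonneg
    by (intro nn_integral_has_integral_lebesgue' integrable_integral integrable_continuous_interval \<psi>Fc)
       auto
  finally have "has_bochner_integral M g I"
  proof (intro has_bochner_integral_nn_integral)
    show "0 \<le> I" unfolding I_def using \<psi>_nonneg Fc_nonneg
      by (intro integral_nonneg integrable_continuous_interval \<psi>Fc) auto
    show "g \<in> borel_measurable M" unfolding g_def M_def by measurable
  qed (use g_nonneg in auto)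
  have "integral\<^sup>L M \<phi> = integral\<^sup>L M (\<lambda>x. \<phi> t + g x)"
    using conc(3) by (intro integral_cong_AE) (auto simp: g_def M_def)
  also have "\<dots> = integral\<^sup>L M (\<lambda>x. \<phi> t) + integral\<^sup>L M g"
    using integrable.intros[OF \<open>has_bochner_integral M g I\<close>]
    by (intro Bochner_Integration.integral_add) auto
  also have "\<dots> = \<phi> t + I"
    using \<open>has_bochner_integral M g I\<close> M.prob_space by (simp add: has_bochner_integral_integral_eq)
  finally show ?thesis by (simp add: M_def I_def)
qed

text \<open>The conditional distribution function \<open>((R x - R s) / (R t - R s))\<^sup>k\<close> on \<open>[s,t]\<close> is a
  distribution function whenever the hazard \<open>R\<close> is nondecreasing and continuous (this
  includes the degenerate case \<open>R t = R s\<close>, a unit mass at \<open>t\<close>).\<close>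
lemma power_ratio_cdf:
  fixes R :: "real \<Rightarrow> real" and k :: nat and s t :: real
  assumes R_mono: "\<And>x y. x \<le> y \<Longrightarrow> R x \<le> R y" and R_cont: "continuous_on UNIV R"
    and "s < t" and "1 \<le> k"
  defines "q \<equiv> \<lambda>x. (R x - R s) / (R t - R s)"
  defines "F \<equiv> \<lambda>x. if x \<le> s then 0 else if t \<le> x then 1 else q x ^ k"
  shows "\<And>x y. x \<le> y \<Longrightarrow> F x \<le> F y" and "\<And>a. continuous (at_right a) F"
proof -
  have q_unit: "0 \<le> q x \<and> q x \<le> 1" if "s \<le> x" "x \<le> t" for x
    using R_mono[OF that(1)] R_mono[OF that(2)]
    by (cases "R t = R s") (auto simp: q_def divide_le_eq_1)
  have q_mono: "q x \<le> q y" if "x \<le> y" for x y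
    using R_mono[OF that] R_mono[of s t] \<open>s < t\<close> by (simp add: q_def divide_right_mono)
  have q_cont: "isCont q x" for x
    using R_cont unfolding q_def divide_inverse continuous_on_eq_continuous_at[OF open_UNIV]
    by (intro continuous_intros) auto
  \<comment> \<open>Below \<open>t\<close>, clamping the argument at \<open>s\<close> gives one continuous formula.\<close>
  have F_eq: "F x = (if t \<le> x then 1 else q (max s x) ^ k)" for x
    using \<open>s < t\<close> \<open>1 \<le> k\<close> by (auto simp: F_def q_def max_def)
  show "F x \<le> F y" if "x \<le> y" for x y
    using that q_unit[of "max s x"] q_unit[of "max s y"] q_mono[of "max s x" "max s y"] \<open>s < t\<close>
    by (auto simp: F_eq intro: power_mono power_le_one)
  show "continuous (at_right a) F" for a
  proof (cases "t \<le> a")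
    case True
    have "eventually (\<lambda>x. F x = 1) (at_right a)"
      using eventually_at_right_less[of a] by eventually_elim (use True in \<open>simp add: F_eq\<close>)
    then show ?thesis
      by (rule continuous_at_right_eventually_eq) (use True in \<open>auto simp: F_eq\<close>)
  next
    case False
    have "eventually (\<lambda>x. x < t) (at_right a)"
      using False eventually_at_right_real[of a t] by (auto elim: eventually_mono)
    then have "eventually (\<lambda>x. F x = q (max s x) ^ k) (at_right a)"
      by (auto simp: F_eq elim: eventually_mono)
    moreover have "isCont (\<lambda>x. q (max s x) ^ k) a"
      by (intro continuous_intros isCont_o2[OF _ q_cont])
    moreover have "F a = q (max s a) ^ k"
      using False by (simp add: F_eq)
    ultimately show ?thesis
      by (intro continuous_at_right_eventually_eq)
  qed
qed

lemma dist_fun_nonneg: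
  assumes "is_dist_fun G" shows "0 \<le> G x"
proof -
  have "mono G" and lim: "(G \<longlongrightarrow> 0) at_bot" using assms by (auto simp: is_dist_fun_def)
  then have "eventually (\<lambda>y. G y \<le> G x) at_bot"
    unfolding eventually_at_bot_linorder by (auto simp: mono_def)
  then show ?thesis using tendsto_upperbound[OF lim] by auto
qed

text \<open>With \<open>r\<^sub>G = \<infinity>\<close> the hazard \<open>R = -ln (1 - G)\<close> is finite everywhere.\<close>
lemma dist_fun_less_one:
  assumes "is_dist_fun G" and "rG G = \<infinity>" shows "G x < 1"
proof (rule ccontr)
  assume "\<not> G x < 1"
  then have "y < x" if "G y < 1" for y
    using that assms(1) unfolding is_dist_fun_def mono_def by (meson linorder_not_le order_trans)
  then have "Sup (ereal ` {y. G y < 1}) \<le> ereal x"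
    by (intro Sup_least) (auto simp: less_imp_le)
  then show False using assms(2) by (simp add: rG_def)
qed

lemma dist_fun_zero_at_zero:
  assumes "is_dist_fun G" and "continuous_on UNIV G" and "lG G = 0" shows "G 0 = 0"
proof (rule ccontr)
  assume "G 0 \<noteq> 0"
  then have "G 0 > 0" using dist_fun_nonneg[OF assms(1), of 0] by simp
  moreover have "(G \<longlongrightarrow> G 0) (at_left 0)"
    using assms(2) by (simp add: continuous_on_eq_continuous_at filterlim_at_split isCont_def)
  ultimately have "eventually (\<lambda>y. 0 < G y) (at_left (0::real))"
    by (rule order_tendstoD(1)[rotated])
  moreover have "eventually (\<lambda>y. y < 0) (at_left (0::real))"
    using eventually_at_left_real[of "-1" "0::real"] by (auto elim: eventually_mono)
  ultimately have "eventually (\<lambda>y. 0 < G y \<and> y < 0) (at_left (0::real))"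
    by (rule eventually_conj)
  then obtain y where "G y > 0" "y < 0"
    using eventually_happens[of _ "at_left (0::real)"] by (auto simp: trivial_limit_at_left_real)
  then have "Inf (ereal ` {y. G y > 0}) \<le> ereal y" by (intro Inf_lower) auto
  with \<open>y < 0\<close> show False using assms(3) by (simp add: lG_def)
qed

lemma RG_mono:
  assumes "is_dist_fun G" and "rG G = \<infinity>" and "x \<le> y" shows "RG G x \<le> RG G y"
  using assms dist_fun_less_one[OF assms(1,2), of x] dist_fun_less_one[OF assms(1,2), of y]
  by (simp add: RG_def is_dist_fun_def mono_def)

lemma RG_continuous:
  assumes "is_dist_fun G" and "rG G = \<infinity>" and "continuous_on UNIV G"
  shows "continuous_on UNIV (RG G)"
  unfolding RG_def[abs_def] using assms(3) dist_fun_less_one[OF assms(1,2)]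
  by (intro continuous_intros) (auto simp: less_le)

lemma RG_tendsto_at_right_zero:
  assumes "is_dist_fun G" and "continuous_on UNIV G" and "lG G = 0" and "rG G = \<infinity>"
  shows "(RG G \<longlongrightarrow> 0) (at_right 0)"
proof -
  have "(RG G \<longlongrightarrow> RG G 0) (at_right 0)"
    using RG_continuous[OF assms(1,4,2)]
    by (simp add: continuous_on_eq_continuous_at filterlim_at_split isCont_def)
  moreover have "RG G 0 = 0"
    using dist_fun_zero_at_zero[OF assms(1-3)] by (simp add: RG_def)
  ultimately show ?thesis by simp
qed

lemma weibull_iff_powr_hazard:
  assumes "is_dist_fun G" and "rG G = \<infinity>"
  shows "(G y = 1 - exp (- c * y powr \<alpha>)) \<longleftrightarrow> (RG G y = c * y powr \<alpha>)"
proof -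
  have "0 < 1 - G y" using dist_fun_less_one[OF assms] by simp
  have "G y = 1 - exp (- c * y powr \<alpha>) \<longleftrightarrow> 1 - G y = exp (- c * y powr \<alpha>)" by auto
  also have "\<dots> \<longleftrightarrow> ln (1 - G y) = - c * y powr \<alpha>"
    using \<open>0 < 1 - G y\<close> by (metis exp_ln ln_unique)
  also have "\<dots> \<longleftrightarrow> RG G y = c * y powr \<alpha>" by (auto simp: RG_def)
  finally show ?thesis .
qed

text \<open>The conditional moment \<open>E[Y(n)\<^sup>-\<^sup>\<alpha>\<^sup>(\<^sup>k\<^sup>+\<^sup>1\<^sup>) | Y(n-k) = s, Y(n+1) = t]\<close>, written through the
  hazard \<open>R\<close> after integration by parts.\<close>
definition cond_moment :: "(real \<Rightarrow> real) \<Rightarrow> nat \<Rightarrow> real \<Rightarrow> real \<Rightarrow> real \<Rightarrow> real" where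
  "cond_moment R k \<alpha> s t = t powr (- (\<alpha> * real (k + 1)))
     + integral {s..t} (\<lambda>u. \<alpha> * real (k + 1) * u powr (- (\<alpha> * real (k + 1)) - 1)
                           * ((R u - R s) / (R t - R s)) ^ k)"

lemma rec_cond_exp_eq_cond_moment:
  assumes G: "is_dist_fun G" "continuous_on UNIV G" "rG G = \<infinity>"
    and "0 < s" "s < t" "1 \<le> k" "0 < \<alpha>"
  shows "rec_cond_exp G n k (\<lambda>x. x powr (- \<alpha> * real (k + 1))) s t = cond_moment (RG G) k \<alpha> s t"
proof -
  define \<beta> where "\<beta> = \<alpha> * real (k + 1)"
  define q where "q x = (RG G x - RG G s) / (RG G t - RG G s)" for x
  have \<beta>_pos: "0 < \<beta>" using \<open>0 < \<alpha>\<close> by (simp add: \<beta>_def)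
  have cdf_eq: "rec_cond_cdf G k s t = (\<lambda>x. if x \<le> s then 0 else if t \<le> x then 1 else q x ^ k)"
    by (simp add: fun_eq_iff rec_cond_cdf_def q_def)
  note cdf = power_ratio_cdf[of "RG G" s t k, OF RG_mono[OF G(1,3)] RG_continuous[OF G(1,3,2)]
      \<open>s < t\<close> \<open>1 \<le> k\<close>, folded q_def, folded cdf_eq]
  have q_nonneg: "0 \<le> q u" if "s \<le> u" for u
    using RG_mono[OF G(1,3) that] RG_mono[OF G(1,3), of s t] \<open>s < t\<close> by (simp add: q_def)
  have "integral\<^sup>L (interval_measure (rec_cond_cdf G k s t)) (\<lambda>x. x powr (- \<beta>))
      = t powr (- \<beta>) + integral {s..t} (\<lambda>u. \<beta> * u powr (- \<beta> - 1) * q u ^ k)"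
  proof (rule interval_measure_integration_by_parts)
    show "(\<lambda>x. x powr (- \<beta>)) \<in> borel_measurable borel"
      "(\<lambda>u. \<beta> * u powr (- \<beta> - 1)) \<in> borel_measurable borel" by measurable
    show "continuous_on {s..t} (\<lambda>u. q u ^ k)"
      using continuous_on_subset[OF RG_continuous[OF G(1,3,2)], of "{s..t}"]
      unfolding q_def divide_inverse by (intro continuous_intros) auto
    show "continuous_on {s..t} (\<lambda>u. \<beta> * u powr (- \<beta> - 1))"
      using \<open>0 < s\<close> by (intro continuous_intros) auto
    fix u assume "u \<in> {s..t}"
    then show "((\<lambda>x. x powr (- \<beta>)) has_real_derivative - (\<beta> * u powr (- \<beta> - 1))) (at u)"
      using \<open>0 < s\<close> has_real_derivative_powr[of u "- \<beta>"] by simp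
  qed (use cdf q_nonneg \<beta>_pos \<open>s < t\<close> \<open>1 \<le> k\<close> in \<open>auto simp: cdf_eq q_def\<close>)
  then show ?thesis
    by (simp add: rec_cond_exp_def rec_cond_law_def cond_moment_def \<beta>_def q_def)
qed

lemma weibull_primitive:
  fixes \<alpha> p u :: real and k :: nat
  assumes "p \<noteq> 0" and u: "0 < u"
  shows "((\<lambda>u. (1 - p / u powr \<alpha>) ^ (k + 1) / p) has_real_derivative
           \<alpha> * real (k + 1) * u powr (- (\<alpha> * real (k + 1)) - 1) * (u powr \<alpha> - p) ^ k) (at u)"
proof -
  define U where "U = u powr \<alpha>"
  have U: "0 < U" using u by (simp add: U_def)
  have "((\<lambda>u. 1 - p / u powr \<alpha>) has_real_derivative p * (\<alpha> * u powr (\<alpha> - 1)) / U\<^sup>2) (at u)"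
    unfolding U_def using u by (auto intro!: derivative_eq_intros simp: power2_eq_square)
  from DERIV_cdivide[OF DERIV_power[OF this, of "k + 1"], of p]
  have "((\<lambda>u. (1 - p / u powr \<alpha>) ^ (k + 1) / p) has_real_derivative
          real (k + 1) * (1 - p / U) ^ k * (p * (\<alpha> * u powr (\<alpha> - 1)) / U\<^sup>2) / p) (at u)"
    by (simp add: U_def mult_ac)
  moreover have "real (k + 1) * (1 - p / U) ^ k * (p * (\<alpha> * u powr (\<alpha> - 1)) / U\<^sup>2) / p
      = \<alpha> * real (k + 1) * u powr (- (\<alpha> * real (k + 1)) - 1) * (U - p) ^ k"
  proof -
    have "u powr (- (\<alpha> * real (k + 1)) - 1) = 1 / (u powr (\<alpha> * real (k + 1)) * u)"
      using u by (simp add: powr_diff powr_minus_divide)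
    also have "u powr (\<alpha> * real (k + 1)) = U ^ (k + 1)"
      unfolding U_def using u by (rule powr_mult_of_nat)
    finally have e1: "u powr (- (\<alpha> * real (k + 1)) - 1) = 1 / (U ^ (k + 1) * u)" .
    have e2: "u powr (\<alpha> - 1) = U / u"
      using u by (simp add: U_def powr_diff)
    show ?thesis unfolding e1 e2 using U u \<open>p \<noteq> 0\<close>
      by (simp add: power_divide field_simps power2_eq_square)
  qed
  ultimately show ?thesis by (simp add: U_def)
qed

text \<open>Its value at \<open>T = t\<^sup>\<alpha>\<close>, rewritten in the form occurring in the target identity.\<close>
lemma weibull_primitive_value:
  fixes p T :: real and k :: nat
  assumes "0 < p" "p < T"
  shows "(1 - p / T) ^ (k + 1) / p = (T - p) ^ k * (1 / (T ^ k * p) - 1 / T ^ (k + 1))"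
proof -
  have "1 - p / T = (T - p) / T" using assms by (simp add: field_simps)
  then show ?thesis using assms by (simp add: power_divide field_simps)
qed

text \<open>Hence, by the fundamental theorem of calculus, the Weibull integrand integrates to \<open>\<Phi> t\<close>
  over \<open>[s,t]\<close>, since \<open>\<Phi> s = 0\<close>.\<close>
lemma weibull_integral:
  fixes \<alpha> s t :: real and k :: nat
  assumes "0 < s" "s < t"
  defines "p \<equiv> s powr \<alpha>"
  shows "((\<lambda>u. \<alpha> * real (k + 1) * u powr (- (\<alpha> * real (k + 1)) - 1) * (u powr \<alpha> - p) ^ k)
           has_integral (1 - p / t powr \<alpha>) ^ (k + 1) / p) {s..t}"
proof -
  have "p \<noteq> 0" using \<open>0 < s\<close> by (simp add: p_def)
  have "((\<lambda>u. \<alpha> * real (k + 1) * u powr (- (\<alpha> * real (k + 1)) - 1) * (u powr \<alpha> - p) ^ k)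
           has_integral (1 - p / t powr \<alpha>) ^ (k + 1) / p - (1 - p / s powr \<alpha>) ^ (k + 1) / p) {s..t}"
  proof (rule fundamental_theorem_of_calculus)
    fix u assume "u \<in> {s..t}"
    then have "0 < u" using \<open>0 < s\<close> by simp
    from weibull_primitive[OF \<open>p \<noteq> 0\<close> this, of \<alpha> k]
    show "((\<lambda>u. (1 - p / u powr \<alpha>) ^ (k + 1) / p) has_vector_derivative
            \<alpha> * real (k + 1) * u powr (- (\<alpha> * real (k + 1)) - 1) * (u powr \<alpha> - p) ^ k) (at u within {s..t})"
      by (simp add: has_real_derivative_iff_has_vector_derivative[symmetric] has_field_derivative_at_within)
  qed (use \<open>s < t\<close> in simp)
  then show ?thesis using \<open>p \<noteq> 0\<close> by (simp add: p_def)
qed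

lemma cond_moment_weibull:
  fixes R :: "real \<Rightarrow> real" and k :: nat
  assumes "0 < \<alpha>" "0 < c" "0 < s" "s < t" and R: "\<And>u. 0 < u \<Longrightarrow> R u = c * u powr \<alpha>"
  shows "cond_moment R k \<alpha> s t = 1 / ((t powr \<alpha>) ^ k * s powr \<alpha>)"
proof -
  define p where "p = s powr \<alpha>"
  define T where "T = t powr \<alpha>"
  have "0 < p" "p < T"
    using assms by (simp_all add: p_def T_def powr_less_mono2)
  have "integral {s..t} (\<lambda>u. \<alpha> * real (k + 1) * u powr (- (\<alpha> * real (k + 1)) - 1)
            * ((R u - R s) / (R t - R s)) ^ k)
      = integral {s..t} (\<lambda>u. \<alpha> * real (k + 1) * u powr (- (\<alpha> * real (k + 1)) - 1)
            * (u powr \<alpha> - p) ^ k / (T - p) ^ k)"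
  proof (rule integral_cong)
    fix u assume "u \<in> {s..t}"
    then have "R u - R s = c * (u powr \<alpha> - p)" "R t - R s = c * (T - p)"
      using assms by (simp_all add: R p_def T_def right_diff_distrib)
    then show "\<alpha> * real (k + 1) * u powr (- (\<alpha> * real (k + 1)) - 1) * ((R u - R s) / (R t - R s)) ^ k
        = \<alpha> * real (k + 1) * u powr (- (\<alpha> * real (k + 1)) - 1) * (u powr \<alpha> - p) ^ k / (T - p) ^ k"
      using \<open>0 < c\<close> by (simp add: power_divide)
  qed
  also have "\<dots> = (1 - p / T) ^ (k + 1) / p / (T - p) ^ k"
    using integral_unique[OF weibull_integral[OF \<open>0 < s\<close> \<open>s < t\<close>, of \<alpha> k]]
    by (simp add: p_def T_def)
  also have "\<dots> = 1 / (T ^ k * p) - 1 / T ^ (k + 1)"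
    using weibull_primitive_value[OF \<open>0 < p\<close> \<open>p < T\<close>, of k] \<open>p < T\<close> by simp
  moreover have "t powr (- (\<alpha> * real (k + 1))) = 1 / T ^ (k + 1)"
    using \<open>0 < s\<close> \<open>s < t\<close> by (simp add: T_def powr_minus_divide powr_mult_of_nat del: of_nat_Suc)
  ultimately show ?thesis
    using \<open>0 < p\<close> \<open>p < T\<close> by (simp add: cond_moment_def p_def T_def)
qed

lemma cond_moment_integral_identity:
  fixes R :: "real \<Rightarrow> real" and k :: nat
  assumes R_mono: "\<And>x y. x \<le> y \<Longrightarrow> R x \<le> R y"
    and "0 < \<alpha>" "1 \<le> k" "0 < s" "s < t"
    and moment: "cond_moment R k \<alpha> s t = 1 / ((t powr \<alpha>) ^ k * s powr \<alpha>)"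
  shows "R s < R t"
    and "integral {s..t} (\<lambda>u. \<alpha> * real (k + 1) * u powr (- (\<alpha> * real (k + 1)) - 1) * (R u - R s) ^ k)
         = ((R t - R s) / (t powr \<alpha> - s powr \<alpha>)) ^ k * ((1 - s powr \<alpha> / t powr \<alpha>) ^ (k + 1) / s powr \<alpha>)"
proof -
  define p where "p = s powr \<alpha>"
  define T where "T = t powr \<alpha>"
  define \<psi> where "\<psi> u = \<alpha> * real (k + 1) * u powr (- (\<alpha> * real (k + 1)) - 1)" for u
  have "0 < p" "p < T"
    using assms by (simp_all add: p_def T_def powr_less_mono2)
  have "t powr (- (\<alpha> * real (k + 1))) = 1 / T ^ (k + 1)"
    using \<open>0 < s\<close> \<open>s < t\<close> by (simp add: T_def powr_minus_divide powr_mult_of_nat del: of_nat_Suc)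
  then have moment': "1 / T ^ (k + 1) + integral {s..t} (\<lambda>u. \<psi> u * ((R u - R s) / (R t - R s)) ^ k)
      = 1 / (T ^ k * p)"
    using moment by (simp add: cond_moment_def \<psi>_def p_def T_def)
  \<comment> \<open>A hazard that is flat on \<open>[s,t]\<close> would make the moment equal to \<open>1 / T\<^sup>k\<^sup>+\<^sup>1\<close>.\<close>
  show "R s < R t"
  proof (rule ccontr)
    assume "\<not> R s < R t"
    then have "R t - R s = 0" using R_mono[of s t] \<open>s < t\<close> by simp
    then have "1 / T ^ (k + 1) = 1 / (T ^ k * p)"
      using moment' \<open>1 \<le> k\<close> by (simp add: zero_power)
    then show False using \<open>0 < p\<close> \<open>p < T\<close> by (simp add: field_simps)
  qed
  have "integral {s..t} (\<lambda>u. \<psi> u * ((R u - R s) / (R t - R s)) ^ k)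
      = integral {s..t} (\<lambda>u. \<psi> u * (R u - R s) ^ k) / (R t - R s) ^ k"
    by (simp add: power_divide flip: integral_divide)
  with moment' have "integral {s..t} (\<lambda>u. \<psi> u * (R u - R s) ^ k)
      = (R t - R s) ^ k * (1 / (T ^ k * p) - 1 / T ^ (k + 1))"
    using \<open>R s < R t\<close> by (simp add: field_simps)
  also have "\<dots> = ((R t - R s) / (T - p)) ^ k * ((1 - p / T) ^ (k + 1) / p)"
    using weibull_primitive_value[OF \<open>0 < p\<close> \<open>p < T\<close>, of k] \<open>p < T\<close> by (simp add: power_divide)
  finally show "integral {s..t} (\<lambda>u. \<alpha> * real (k + 1) * u powr (- (\<alpha> * real (k + 1)) - 1) * (R u - R s) ^ k)
      = ((R t - R s) / (t powr \<alpha> - s powr \<alpha>)) ^ k * ((1 - s powr \<alpha> / t powr \<alpha>) ^ (k + 1) / s powr \<alpha>)"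
    by (simp add: \<psi>_def p_def T_def)
qed

lemma cond_moment_characterization:
  fixes R :: "real \<Rightarrow> real" and k :: nat
  assumes R_mono: "\<And>x y. x \<le> y \<Longrightarrow> R x \<le> R y" and R_cont: "continuous_on UNIV R"
    and "0 < \<alpha>" "1 \<le> k" "0 < s"
    and moment: "\<And>t. s < t \<Longrightarrow> cond_moment R k \<alpha> s t = 1 / ((t powr \<alpha>) ^ k * s powr \<alpha>)"
  shows "\<exists>C>0. \<forall>t>s. R t - R s = C * (t powr \<alpha> - s powr \<alpha>)"
proof -
  define p where "p = s powr \<alpha>"
  define \<psi> where "\<psi> u = \<alpha> * real (k + 1) * u powr (- (\<alpha> * real (k + 1)) - 1)" for u
  define \<Phi> where "\<Phi> u = (1 - p / u powr \<alpha>) ^ (k + 1) / p" for u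
  define h where "h t = integral {s..t} (\<lambda>u. \<psi> u * (R u - R s) ^ k)" for t
  define e where "e t = ((R t - R s) / (t powr \<alpha> - p)) ^ k" for t
  have "0 < p" using \<open>0 < s\<close> by (simp add: p_def)
  have p_less: "p < t powr \<alpha>" if "s < t" for t
    using that \<open>0 < s\<close> \<open>0 < \<alpha>\<close> by (simp add: p_def powr_less_mono2)
  have R_less: "R s < R t" if "s < t" for t
    using R_mono \<open>0 < \<alpha>\<close> \<open>1 \<le> k\<close> \<open>0 < s\<close> that moment[OF that]
    by (rule cond_moment_integral_identity(1))
  have h_eq: "h t = e t * \<Phi> t" if "s < t" for t
  proof -
    have "integral {s..t} (\<lambda>u. \<alpha> * real (k + 1) * u powr (- (\<alpha> * real (k + 1)) - 1) * (R u - R s) ^ k)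
        = ((R t - R s) / (t powr \<alpha> - s powr \<alpha>)) ^ k * ((1 - s powr \<alpha> / t powr \<alpha>) ^ (k + 1) / s powr \<alpha>)"
      using R_mono \<open>0 < \<alpha>\<close> \<open>1 \<le> k\<close> \<open>0 < s\<close> that moment[OF that]
      by (rule cond_moment_integral_identity(2))
    then show ?thesis by (simp add: h_def e_def \<Phi>_def \<psi>_def p_def)
  qed
  have h_deriv: "(h has_real_derivative e t * (\<psi> t * (t powr \<alpha> - p) ^ k)) (at t)" if "s < t" for t
  proof -
    have "continuous_on {s..} (\<lambda>u. \<psi> u * (R u - R s) ^ k)"
      unfolding \<psi>_def using \<open>0 < s\<close>
      by (intro continuous_intros continuous_on_subset[OF R_cont]) auto
    then have "(h has_real_derivative \<psi> t * (R t - R s) ^ k) (at t)"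
      unfolding h_def[abs_def] using that by (rule integral_upper_limit_has_derivative)
    moreover have "\<psi> t * (R t - R s) ^ k = e t * (\<psi> t * (t powr \<alpha> - p) ^ k)"
      using p_less[OF that] by (simp add: e_def power_divide)
    ultimately show ?thesis by simp
  qed
  \<comment> \<open>\<open>h\<close> and the Weibull primitive \<open>\<Phi>\<close> satisfy \<open>h = e \<Phi>\<close> and \<open>h' = e \<Phi>'\<close>, so \<open>e\<close> is constant.\<close>
  have e_const: "e t = e (s + 1)" if "s < t" for t
  proof (rule ratio_constant[of s h e])
    fix x assume "s < x"
    show "(\<Phi> has_real_derivative \<psi> x * (x powr \<alpha> - p) ^ k) (at x)"
      unfolding \<Phi>_def \<psi>_def using weibull_primitive[of p x \<alpha> k] \<open>0 < p\<close> \<open>0 < s\<close> \<open>s < x\<close> by simp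
    show "\<Phi> x \<noteq> 0"
      using p_less[OF \<open>s < x\<close>] \<open>0 < p\<close> by (simp add: \<Phi>_def)
  qed (use that h_deriv h_eq in auto)
  define C where "C = (R (s + 1) - R s) / ((s + 1) powr \<alpha> - p)"
  have C_pos: "0 < C" using R_less[of "s + 1"] p_less[of "s + 1"] by (simp add: C_def)
  show ?thesis
  proof (intro exI conjI allI impI)
    fix t assume "s < t"
    have "((R t - R s) / (t powr \<alpha> - p)) ^ k = C ^ k"
      using e_const[OF \<open>s < t\<close>] by (simp add: e_def C_def)
    then have "(R t - R s) / (t powr \<alpha> - p) = C"
      by (rule power_eq_imp_eq_base)
         (use R_less[OF \<open>s < t\<close>] p_less[OF \<open>s < t\<close>] C_pos \<open>1 \<le> k\<close> in auto)
    then show "R t - R s = C * (t powr \<alpha> - s powr \<alpha>)"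
      using p_less[OF \<open>s < t\<close>] by (simp add: p_def field_simps)
  qed (rule C_pos)
qed

lemma powr_law_from_increments:
  fixes R :: "real \<Rightarrow> real" and \<alpha> :: real
  assumes "0 < \<alpha>" and R_lim: "(R \<longlongrightarrow> 0) (at_right 0)"
    and incr: "\<And>s. 0 < s \<Longrightarrow> \<exists>C>0. \<forall>t>s. R t - R s = C * (t powr \<alpha> - s powr \<alpha>)"
  shows "\<exists>c>0. \<forall>y>0. R y = c * y powr \<alpha>"
proof -
  obtain C where C: "\<And>s. 0 < s \<Longrightarrow> 0 < C s \<and> (\<forall>t>s. R t - R s = C s * (t powr \<alpha> - s powr \<alpha>))"
    using incr by metis
  \<comment> \<open>Comparing the increments over \<open>[s\<^sub>2, s\<^sub>2 + 1]\<close> seen from \<open>s\<^sub>1\<close> and from \<open>s\<^sub>2\<close>.\<close>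
  have C_eq: "C s\<^sub>1 = C s\<^sub>2" if "0 < s\<^sub>1" "s\<^sub>1 < s\<^sub>2" for s\<^sub>1 s\<^sub>2
  proof -
    define t where "t = s\<^sub>2 + 1"
    have "R t - R s\<^sub>1 = C s\<^sub>1 * (t powr \<alpha> - s\<^sub>1 powr \<alpha>)" "R s\<^sub>2 - R s\<^sub>1 = C s\<^sub>1 * (s\<^sub>2 powr \<alpha> - s\<^sub>1 powr \<alpha>)"
      "R t - R s\<^sub>2 = C s\<^sub>2 * (t powr \<alpha> - s\<^sub>2 powr \<alpha>)"
      using C[of s\<^sub>1] C[of s\<^sub>2] that by (auto simp: t_def)
    then have "C s\<^sub>1 * (t powr \<alpha> - s\<^sub>2 powr \<alpha>) = C s\<^sub>2 * (t powr \<alpha> - s\<^sub>2 powr \<alpha>)"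
      by (simp add: algebra_simps)
    moreover have "s\<^sub>2 powr \<alpha> < t powr \<alpha>"
      using that \<open>0 < \<alpha>\<close> by (simp add: t_def powr_less_mono2)
    ultimately show ?thesis by simp
  qed
  define c where "c = C 1"
  show ?thesis
  proof (intro exI conjI allI impI)
    show "0 < c" using C[of 1] by (simp add: c_def)
    fix y :: real assume "0 < y"
    \<comment> \<open>Let the left end point \<open>s\<close> of the increment tend to \<open>0\<close>.\<close>
    have "eventually (\<lambda>s. s \<in> {0<..<min y 1}) (at_right 0)"
      using \<open>0 < y\<close> by (intro eventually_at_right_real) simp
    then have increment: "eventually (\<lambda>s. R y - R s = c * (y powr \<alpha> - s powr \<alpha>)) (at_right 0)"
    proof eventually_elim
      case (elim s)
      then show ?case using C[of s] C_eq[of s 1] by (simp add: c_def)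
    qed
    have "((\<lambda>s. R y - R s) \<longlongrightarrow> R y) (at_right 0)"
      using tendsto_diff[OF tendsto_const R_lim] by simp
    then have lim_R: "((\<lambda>s. c * (y powr \<alpha> - s powr \<alpha>)) \<longlongrightarrow> R y) (at_right 0)"
      using tendsto_cong[OF increment] by simp
    have "eventually (\<lambda>s. 0 \<le> s) (at_right (0::real))"
      using eventually_at_right_less[of "0::real"] by eventually_elim simp
    then have "((\<lambda>s. c * (y powr \<alpha> - s powr \<alpha>)) \<longlongrightarrow> c * (y powr \<alpha> - 0)) (at_right 0)"
      using \<open>0 < \<alpha>\<close> by (intro tendsto_intros tendsto_zero_powrI[OF tendsto_ident_at]) auto
    with lim_R show "R y = c * y powr \<alpha>"
      using tendsto_unique[OF trivial_limit_at_right_real] by force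
  qed
qed

theorem mainTheorem14:
  fixes G :: "real \<Rightarrow> real" and n k :: nat and \<alpha> :: real
  assumes "n \<ge> 2" and "1 \<le> k" and "k \<le> n - 1" and "\<alpha> > 0"
    and "is_dist_fun G" and "continuous_on UNIV G"
    and "lG G = 0" and "rG G = \<infinity>"
  shows "(\<exists>c>0. \<forall>y>0. G y = 1 - exp (- c * y powr \<alpha>)) \<longleftrightarrow>
         (\<forall>s t. 0 < s \<and> s < t \<longrightarrow>
            rec_cond_exp G n k (\<lambda>x. x powr (- \<alpha> * real (k + 1))) s t
              = t powr (- \<alpha> * real k) * s powr (- \<alpha>))"
proof -
  have target: "t powr (- \<alpha> * real k) * s powr (- \<alpha>) = 1 / ((t powr \<alpha>) ^ k * s powr \<alpha>)"
    if "0 < s" "s < t" for s t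
    using that by (simp add: powr_minus_divide powr_mult_of_nat)
  have moment: "rec_cond_exp G n k (\<lambda>x. x powr (- \<alpha> * real (k + 1))) s t = cond_moment (RG G) k \<alpha> s t"
    if "0 < s" "s < t" for s t
    using rec_cond_exp_eq_cond_moment assms that by blast
  show ?thesis
    unfolding weibull_iff_powr_hazard[OF assms(5,8)]
  proof
    assume "\<exists>c>0. \<forall>y>0. RG G y = c * y powr \<alpha>"
    then obtain c where "0 < c" and "\<And>y. 0 < y \<Longrightarrow> RG G y = c * y powr \<alpha>" by blast
    then show "\<forall>s t. 0 < s \<and> s < t \<longrightarrow> rec_cond_exp G n k (\<lambda>x. x powr (- \<alpha> * real (k + 1))) s t
        = t powr (- \<alpha> * real k) * s powr (- \<alpha>)"
      using cond_moment_weibull[OF \<open>\<alpha> > 0\<close> \<open>0 < c\<close>] moment target by simp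
  next
    assume "\<forall>s t. 0 < s \<and> s < t \<longrightarrow> rec_cond_exp G n k (\<lambda>x. x powr (- \<alpha> * real (k + 1))) s t
        = t powr (- \<alpha> * real k) * s powr (- \<alpha>)"
    then have "\<exists>C>0. \<forall>t>s. RG G t - RG G s = C * (t powr \<alpha> - s powr \<alpha>)" if "0 < s" for s
      using that moment target RG_mono[OF assms(5,8)] RG_continuous[OF assms(5,8,6)] assms(2,4)
      by (intro cond_moment_characterization) auto
    then show "\<exists>c>0. \<forall>y>0. RG G y = c * y powr \<alpha>"
      by (rule powr_law_from_increments[OF \<open>\<alpha> > 0\<close> RG_tendsto_at_right_zero[OF assms(5-8)]])
  qed
qed

end
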